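(* Let $f_n(x)=\sum_{[\pi]\in\mathfrak{C}_{n}^o}x^{\operatorname{drop}_{oo}([\pi])}$. Then $f_1=1$ and for every $n\ge1$: (i) $f_{2n}=nf_{2n-1}-x\frac{d}{dx}f_{2n-1}+\frac{d}{dx}f_{2n-1}$; (ii) $f_{2n+1}=nxf_{2n}-x^2\frac{d}{dx}f_{2n}+x\frac{d}{dx}f_{2n}$.
   Context: For $n\ge1$, a cycle on $[n]=\{1,\dots,n\}$ is an equivalence class $[\pi]$ of permutations $\pi=\pi_1\cdots\pi_n$ of $[n]$ (in one-line notation) under cyclic rotation of the entries; the set of cycles on $[n]$ is $\mathfrak{C}_n$. Each cycle is represented by the permutation $\pi$ with $\pi_1=1$, and indices are read modulo $n$. A drop of $[\pi]$ is a consecutive pair $(\pi_i,\pi_{i+1})$, $1\le i\le n$, with $\pi_i>\pi_{i+1}$. By convention, the unique cycle $[(1)]\in\mathfrak{C}_1$ has exactly one drop $(\star,1)$, where $\star$ is considered neither even nor odd. A drop $(a,b)$ is odd-odd if $a,b$ are both odd; $\operatorname{drop}_{oo}([\pi])$ is the number of odd-odd drops of $[\pi]$. $\mathfrak{C}_n^o$ is the set of cycles $[\pi]\in\mathfrak{C}_n$ such that for every drop $(\pi_i,\pi_{i+1})$, the entry $\pi_{i+1}$ is odd. *)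

theory Defs
  imports "HOL-Computational_Algebra.Polynomial"
begin

text \<open>A cycle on [n] is represented by its unique representative permutation
  (one-line notation, as a list) whose first entry is 1.\<close>
definition cycle_reps :: "nat \<Rightarrow> nat list set" where
  "cycle_reps n = {p. length p = n \<and> distinct p \<and> set p = {1..n} \<and> p \<noteq> [] \<and> p ! 0 = 1}"

definition nxt :: "nat list \<Rightarrow> nat \<Rightarrow> nat" where
  "nxt p i = p ! ((i + 1) mod length p)"

definition drop_pos :: "nat list \<Rightarrow> nat set" where
  "drop_pos p = {i. i < length p \<and> p ! i > nxt p i}"

definition drop_oo :: "nat list \<Rightarrow> nat" where
  "drop_oo p = card {i \<in> drop_pos p. odd (p ! i) \<and> odd (nxt p i)}"

definition cycles_o :: "nat \<Rightarrow> nat list set" where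
  "cycles_o n = {p \<in> cycle_reps n. \<forall>i \<in> drop_pos p. odd (nxt p i)}"

definition f_poly :: "nat \<Rightarrow> int poly" where
  "f_poly n = (\<Sum>p \<in> cycles_o n. monom 1 (drop_oo p))"

end

theory Submission
  imports Defs
begin

(* Every cycle in C^o_{L+1} (L >= 1) arises in exactly one way from a cycle in C^o_L by inserting
   the new maximum L+1 directly before an odd entry: L+1 always starts a drop, so its successor
   must be odd, and deleting L+1 merges the two pairs around it into one that ends in that odd
   successor. A cycle on [L] has (L+1) div 2 odd entries, hence that many insertion slots.
   Inserting L+1 into the pair (a, b) destroys the drop (a, b) if it was odd-odd and creates the
   drop (L+1, b), which is odd-odd iff L+1 is odd. So, with e = [L+1 odd] and h = (L+1) div 2, a
   cycle with d odd-odd drops contributes d x^(d+e-1) + (h - d) x^(d+e) to f_{L+1}, which is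
   x^e (h g - x g' + g') at g = x^d. For L+1 = 2n and L+1 = 2n+1 this is (i) and (ii). *)

fun adj_pairs :: "'a list \<Rightarrow> ('a \<times> 'a) list" where
  "adj_pairs (a # b # xs) = (a, b) # adj_pairs (b # xs)"
| "adj_pairs _ = []"

lemma length_adj_pairs [simp]: "length (adj_pairs xs) = length xs - 1"
  by (induction xs rule: adj_pairs.induct) auto

lemma nth_adj_pairs: "j < length xs - 1 \<Longrightarrow> adj_pairs xs ! j = (xs ! j, xs ! Suc j)"
proof (induction xs arbitrary: j rule: adj_pairs.induct)
  case (1 a b xs)
  then show ?case by (cases j) auto
qed auto

lemma adj_pairs_Cons: "xs \<noteq> [] \<Longrightarrow> adj_pairs (a # xs) = (a, hd xs) # adj_pairs xs"
  by (cases xs) auto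

lemma adj_pairs_append:
  "xs \<noteq> [] \<Longrightarrow> ys \<noteq> [] \<Longrightarrow> adj_pairs (xs @ ys) = adj_pairs xs @ (last xs, hd ys) # adj_pairs ys"
proof (induction xs)
  case (Cons a xs)
  then show ?case by (cases xs; cases ys) auto
qed simp

lemma map_snd_adj_pairs: "map snd (adj_pairs xs) = tl xs"
  by (induction xs rule: adj_pairs.induct) auto

definition cyclic_pairs :: "'a list \<Rightarrow> ('a \<times> 'a) list" where
  "cyclic_pairs p = adj_pairs (p @ [hd p])"

lemma length_cyclic_pairs [simp]: "length (cyclic_pairs p) = length p"
  by (simp add: cyclic_pairs_def)

lemma nxt_conv_nth_append_hd:
  assumes "i < length p"
  shows "nxt p i = (p @ [hd p]) ! Suc i"
proof (cases "Suc i < length p")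
  case False
  then have "Suc i = length p" using assms by simp
  then show ?thesis by (cases p) (simp_all add: nxt_def)
qed (simp add: nxt_def nth_append)

lemma nxt_in_set: "i < length p \<Longrightarrow> nxt p i \<in> set p"
  unfolding nxt_def by (intro nth_mem mod_less_divisor) auto

lemma nth_cyclic_pairs: "j < length p \<Longrightarrow> cyclic_pairs p ! j = (p ! j, nxt p j)"
  by (simp add: cyclic_pairs_def nth_adj_pairs nxt_conv_nth_append_hd nth_append)

lemma map_snd_cyclic_pairs: "p \<noteq> [] \<Longrightarrow> map snd (cyclic_pairs p) = tl p @ [hd p]"
  by (simp add: cyclic_pairs_def map_snd_adj_pairs)

definition insert_after :: "'a list \<Rightarrow> nat \<Rightarrow> 'a \<Rightarrow> 'a list" where
  "insert_after p i m = take (Suc i) p @ m # drop (Suc i) p"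

lemma length_insert_after [simp]: "length (insert_after p i m) = Suc (length p)"
  by (simp add: insert_after_def)

lemma insert_after_not_Nil [simp]: "insert_after p i m \<noteq> []"
  by (simp add: insert_after_def)

lemma set_insert_after [simp]: "set (insert_after p i m) = insert m (set p)"
  by (metis insert_after_def append_take_drop_id set_append set_simps(2) Un_insert_right)

lemma distinct_insert_after [simp]:
  "distinct (insert_after p i m) \<longleftrightarrow> m \<notin> set p \<and> distinct p"
  by (subst (2 3) append_take_drop_id[symmetric, where n = "Suc i"])
    (auto simp: insert_after_def simp del: append_take_drop_id)

lemma cyclic_pairs_insert_after:
  assumes "i < length p"
  obtains A B where "cyclic_pairs p = A @ (p ! i, nxt p i) # B"
    and "cyclic_pairs (insert_after p i m) = A @ (p ! i, m) # (m, nxt p i) # B"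
proof -
  define xs where "xs = take (Suc i) (p @ [hd p])"
  define ys where "ys = drop (Suc i) (p @ [hd p])"
  have xs: "xs \<noteq> []" "last xs = p ! i"
    using assms by (auto simp: xs_def take_Suc_conv_app_nth)
  have ys: "ys \<noteq> []" "hd ys = nxt p i"
    using assms by (simp_all add: ys_def nxt_conv_nth_append_hd hd_drop_conv_nth del: drop_append)
  have "hd (insert_after p i m) = hd p"
    using assms by (cases p) (auto simp: insert_after_def)
  then have "insert_after p i m @ [hd (insert_after p i m)] = xs @ m # ys"
    using assms by (simp add: insert_after_def xs_def ys_def)
  then show thesis
    using that[of "adj_pairs xs" "adj_pairs ys"] xs ys
    by (simp add: cyclic_pairs_def adj_pairs_append adj_pairs_Cons
        flip: append_take_drop_id[of "Suc i" "p @ [hd p]", folded xs_def ys_def])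
qed

lemma insert_after_inj:
  assumes "m \<notin> set p" "m \<notin> set q" "i < length p" "j < length q"
    and "insert_after p i m = insert_after q j m"
  shows "p = q" "i = j"
proof -
  have "m \<notin> set (take (Suc i) p)" "m \<notin> set (drop (Suc i) p)"
    using assms(1) by (auto dest: in_set_takeD in_set_dropD)
  then have "take (Suc i) p = take (Suc j) q" "drop (Suc i) p = drop (Suc j) q"
    using assms(5) append_Cons_eq_iff by (fastforce simp: insert_after_def)+
  then show "p = q" "i = j"
    using assms(3,4) by (metis append_take_drop_id, metis length_take min_absorb2 Suc_leI Suc_inject)
qed

definition odd_drop :: "nat \<times> nat \<Rightarrow> bool" where
  "odd_drop e \<longleftrightarrow> snd e < fst e \<and> odd (fst e) \<and> odd (snd e)"

definition drop_to_odd :: "nat \<times> nat \<Rightarrow> bool" where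
  "drop_to_odd e \<longleftrightarrow> (snd e < fst e \<longrightarrow> odd (snd e))"

lemma drop_oo_eq_length_filter: "drop_oo p = length (filter odd_drop (cyclic_pairs p))"
  unfolding drop_oo_def length_filter_conv_card
  by (rule arg_cong[where f = card]) (auto simp: drop_pos_def nth_cyclic_pairs odd_drop_def)

lemma mem_cycles_o_iff:
  "p \<in> cycles_o L \<longleftrightarrow> p \<in> cycle_reps L \<and> (\<forall>e \<in> set (cyclic_pairs p). drop_to_odd e)"
  by (auto simp: cycles_o_def drop_pos_def all_set_conv_all_nth nth_cyclic_pairs drop_to_odd_def)

lemma cycles_oD:
  assumes "p \<in> cycles_o L"
  shows "length p = L" "distinct p" "set p = {1..L}" "p ! 0 = 1"
  using assms by (auto simp: cycles_o_def cycle_reps_def)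

definition odd_succ_positions :: "nat list \<Rightarrow> nat set" where
  "odd_succ_positions p = {i. i < length p \<and> odd (nxt p i)}"

lemma card_odd_atLeastAtMost: "card {k \<in> {1..n}. odd k} = Suc n div 2"
proof (induction n)
  case (Suc n)
  have "{k \<in> {1..Suc n}. odd k} =
      (if odd (Suc n) then insert (Suc n) {k \<in> {1..n}. odd k} else {k \<in> {1..n}. odd k})"
    by (auto simp: atLeastAtMostSuc_conv)
  then show ?case using Suc by auto
qed simp

lemma card_odd_succ_positions:
  assumes "p \<in> cycle_reps L"
  shows "card (odd_succ_positions p) = Suc L div 2"
proof -
  have p: "p \<noteq> []" "distinct p" "set p = {1..L}"
    using assms by (auto simp: cycle_reps_def)
  have "card (odd_succ_positions p) = length (filter odd (map snd (cyclic_pairs p)))"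
    unfolding length_filter_conv_card odd_succ_positions_def
    by (rule arg_cong[where f = card]) (auto simp: nth_cyclic_pairs)
  also have "\<dots> = length (filter odd p)"
    using p by (cases p) (simp_all add: map_snd_cyclic_pairs)
  also have "\<dots> = Suc L div 2"
  proof -
    have "{k. odd k} \<inter> set p = {k \<in> {1..L}. odd k}"
      using p by blast
    then show ?thesis
      using p card_odd_atLeastAtMost by (simp add: distinct_length_filter)
  qed
  finally show ?thesis .
qed

lemma drop_oo_insert_after:
  assumes "i < length p"
  shows "drop_oo (insert_after p i m) + of_bool (odd_drop (p ! i, nxt p i))
       = drop_oo p + of_bool (odd_drop (p ! i, m)) + of_bool (odd_drop (m, nxt p i))"
proof -
  obtain A B where "cyclic_pairs p = A @ (p ! i, nxt p i) # B"
    and "cyclic_pairs (insert_after p i m) = A @ (p ! i, m) # (m, nxt p i) # B"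
    using assms by (rule cyclic_pairs_insert_after)
  then show ?thesis
    by (simp add: drop_oo_eq_length_filter)
qed

lemma insert_max_in_cycles_o:
  assumes p: "p \<in> cycles_o L" and i: "i \<in> odd_succ_positions p"
  shows "insert_after p i (Suc L) \<in> cycles_o (Suc L)"
proof -
  note reps = cycles_oD[OF p]
  have il: "i < length p" and odd_nxt: "odd (nxt p i)"
    using i by (auto simp: odd_succ_positions_def)
  have "p ! i \<in> set p" "nxt p i \<in> set p"
    using il by (simp_all add: nxt_in_set)
  then have "p ! i < Suc L" "nxt p i < Suc L"
    using reps by auto
  moreover obtain A B where "cyclic_pairs p = A @ (p ! i, nxt p i) # B"
    and "cyclic_pairs (insert_after p i (Suc L)) = A @ (p ! i, Suc L) # (Suc L, nxt p i) # B"
    using il by (rule cyclic_pairs_insert_after)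
  ultimately have "\<forall>e \<in> set (cyclic_pairs (insert_after p i (Suc L))). drop_to_odd e"
    using p odd_nxt unfolding mem_cycles_o_iff by (auto simp: drop_to_odd_def)
  moreover have "insert_after p i (Suc L) ! 0 = 1"
    using reps il by (simp add: insert_after_def nth_append)
  then have "insert_after p i (Suc L) \<in> cycle_reps (Suc L)"
    using reps by (auto simp: cycle_reps_def atLeastAtMostSuc_conv)
  ultimately show ?thesis
    by (simp add: mem_cycles_o_iff)
qed

lemma cycles_o_SucE:
  assumes q: "q \<in> cycles_o (Suc L)" and "L \<ge> 1"
  obtains p i where "p \<in> cycles_o L" "i \<in> odd_succ_positions p" "q = insert_after p i (Suc L)"
proof -
  have q_reps: "length q = Suc L" "distinct q" "set q = {1..Suc L}" "q ! 0 = 1"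
    using q by (rule cycles_oD)+
  then have "Suc L \<in> set q"
    by simp
  then obtain u v where q_split: "q = u @ Suc L # v"
    by (meson split_list)
  have "u \<noteq> []"
    using q_split q_reps(4) \<open>L \<ge> 1\<close> by (cases u) auto
  define p where "p = u @ v"
  define i where "i = length u - 1"
  have il: "i < length p"
    using \<open>u \<noteq> []\<close> by (cases u) (simp_all add: i_def p_def)
  have q_ins: "q = insert_after p i (Suc L)"
    using \<open>u \<noteq> []\<close> q_split by (simp add: insert_after_def i_def p_def)
  have "Suc L \<notin> set p" "distinct p"
    using q_reps(2) unfolding q_ins by simp_all
  moreover have "set p = {1..L}"
  proof -
    have "insert (Suc L) (set p) = insert (Suc L) {1..L}"
      using q_reps(3) unfolding q_ins by (simp add: atLeastAtMostSuc_conv)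
    then show ?thesis
      using \<open>Suc L \<notin> set p\<close> by (metis atLeastAtMost_iff insert_ident not_less_eq_eq order_refl)
  qed
  moreover have "p ! 0 = 1" "length p = L"
    using q_reps(1,4) \<open>u \<noteq> []\<close> q_split by (simp_all add: p_def nth_append)
  ultimately have p_reps: "p \<in> cycle_reps L"
    using \<open>u \<noteq> []\<close> by (simp add: cycle_reps_def p_def)
  obtain A B where pairs_p: "cyclic_pairs p = A @ (p ! i, nxt p i) # B"
    and pairs_q: "cyclic_pairs q = A @ (p ! i, Suc L) # (Suc L, nxt p i) # B"
    using il unfolding q_ins by (rule cyclic_pairs_insert_after)
  have "nxt p i \<le> L"
    using nxt_in_set[OF il] \<open>set p = {1..L}\<close> by simp
  then have "odd (nxt p i)"
    using q pairs_q by (simp add: mem_cycles_o_iff drop_to_odd_def)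
  then have "p \<in> cycles_o L"
    using q pairs_p pairs_q p_reps by (auto simp: mem_cycles_o_iff drop_to_odd_def)
  moreover have "i \<in> odd_succ_positions p"
    using il \<open>odd (nxt p i)\<close> by (simp add: odd_succ_positions_def)
  ultimately show thesis
    using q_ins that by blast
qed

lemma bij_betw_insert_max:
  assumes "L \<ge> 1"
  shows "bij_betw (\<lambda>(p, i). insert_after p i (Suc L))
           (SIGMA p:cycles_o L. odd_succ_positions p) (cycles_o (Suc L))"
proof (rule bij_betw_imageI)
  show "inj_on (\<lambda>(p, i). insert_after p i (Suc L)) (SIGMA p:cycles_o L. odd_succ_positions p)"
  proof (rule inj_onI, clarify)
    fix p i q j
    assume "p \<in> cycles_o L" "i \<in> odd_succ_positions p"
      and "q \<in> cycles_o L" "j \<in> odd_succ_positions q"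
      and "insert_after p i (Suc L) = insert_after q j (Suc L)"
    then show "p = q \<and> i = j"
      using insert_after_inj[of "Suc L" p q i j]
      by (auto simp: odd_succ_positions_def dest!: cycles_oD(3))
  qed
  show "(\<lambda>(p, i). insert_after p i (Suc L)) ` (SIGMA p:cycles_o L. odd_succ_positions p)
      = cycles_o (Suc L)"
  proof (intro equalityI subsetI)
    fix q assume "q \<in> cycles_o (Suc L)"
    then obtain p i where "p \<in> cycles_o L" "i \<in> odd_succ_positions p" "q = insert_after p i (Suc L)"
      using assms by (rule cycles_o_SucE)
    then show "q \<in> (\<lambda>(p, i). insert_after p i (Suc L))
        ` (SIGMA p:cycles_o L. odd_succ_positions p)"
      by (auto intro: image_eqI[where x = "(p, i)"])
  qed (auto intro: insert_max_in_cycles_o)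
qed

lemma drop_oo_insert_max:
  assumes p: "p \<in> cycles_o L" and i: "i \<in> odd_succ_positions p"
  shows "drop_oo (insert_after p i (Suc L)) + of_bool (odd_drop (p ! i, nxt p i))
       = drop_oo p + of_bool (odd (Suc L))"
proof -
  have il: "i < length p" and "odd (nxt p i)"
    using i by (simp_all add: odd_succ_positions_def)
  moreover have "p ! i \<in> set p" "nxt p i \<in> set p"
    using il by (simp_all add: nxt_in_set)
  then have "p ! i < Suc L" "nxt p i < Suc L"
    using cycles_oD(3)[OF p] by auto
  ultimately show ?thesis
    using drop_oo_insert_after[OF il, of "Suc L"] by (simp add: odd_drop_def)
qed

lemma finite_cycles_o: "finite (cycles_o L)"
proof (rule finite_subset)
  show "cycles_o L \<subseteq> {xs. set xs \<subseteq> {1..L} \<and> length xs = L}"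
    by (auto simp: cycles_o_def cycle_reps_def)
  show "finite {xs. set xs \<subseteq> {1..L} \<and> length xs = L}"
    by (rule finite_lists_length_eq) simp
qed

definition insertion_op :: "nat \<Rightarrow> nat \<Rightarrow> 'a::idom poly \<Rightarrow> 'a poly" where
  "insertion_op h e g =
     smult (of_nat h) (monom 1 e * g) - monom 1 (Suc e) * pderiv g + monom 1 e * pderiv g"

lemma insertion_op_add: "insertion_op h e (f + g) = insertion_op h e f + insertion_op h e g"
  by (simp add: insertion_op_def pderiv_add smult_add_right algebra_simps)

lemma insertion_op_sum: "insertion_op h e (sum g A) = (\<Sum>x\<in>A. insertion_op h e (g x))"
  by (induction A rule: infinite_finite_induct) (simp_all add: insertion_op_add insertion_op_def[of _ _ 0])

lemma insertion_op_monom: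
  "insertion_op h e (monom 1 d) = monom (of_nat d) (d + e - 1) + monom (of_nat h - of_nat d) (d + e)"
  by (cases d)
    (simp_all add: insertion_op_def pderiv_monom mult_monom smult_monom diff_monom algebra_simps)

lemma sum_insert_max_monom:
  assumes p: "p \<in> cycles_o L"
  shows "(\<Sum>i\<in>odd_succ_positions p. monom (1::'a::idom) (drop_oo (insert_after p i (Suc L))))
       = insertion_op (Suc L div 2) (of_bool (odd (Suc L))) (monom 1 (drop_oo p))"
proof -
  define S where "S = odd_succ_positions p"
  define D where "D = {i \<in> S. odd_drop (p ! i, nxt p i)}"
  define d where "d = drop_oo p"
  define e :: nat where "e = of_bool (odd (Suc L))"
  have "finite S" "D \<subseteq> S"
    by (auto simp: S_def D_def odd_succ_positions_def)
  have card_D: "card D = d"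
    unfolding D_def S_def d_def drop_oo_def
    by (rule arg_cong[where f = card]) (auto simp: odd_succ_positions_def drop_pos_def odd_drop_def)
  have card_S: "card S = Suc L div 2"
    using p unfolding S_def by (intro card_odd_succ_positions) (simp add: cycles_o_def)
  have drop_D: "drop_oo (insert_after p i (Suc L)) = d + e - 1" if "i \<in> D" for i
    using drop_oo_insert_max[OF p, of i] that by (simp add: D_def S_def d_def e_def)
  have drop_rest: "drop_oo (insert_after p i (Suc L)) = d + e" if "i \<in> S - D" for i
    using drop_oo_insert_max[OF p, of i] that by (simp add: D_def S_def d_def e_def)
  have "(\<Sum>i\<in>S. monom (1::'a) (drop_oo (insert_after p i (Suc L))))
      = (\<Sum>i\<in>S - D. monom 1 (drop_oo (insert_after p i (Suc L))))
        + (\<Sum>i\<in>D. monom 1 (drop_oo (insert_after p i (Suc L))))"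
    using \<open>D \<subseteq> S\<close> \<open>finite S\<close> by (rule sum.subset_diff)
  also have "\<dots> = of_nat (card (S - D)) * monom 1 (d + e)
                   + of_nat (card D) * monom 1 (d + e - 1)"
    by (simp add: drop_D drop_rest)
  also have "\<dots> = monom (of_nat d) (d + e - 1)
                   + monom (of_nat (Suc L div 2) - of_nat d) (d + e)"
    using card_D card_S \<open>D \<subseteq> S\<close> \<open>finite S\<close> card_mono[OF \<open>finite S\<close> \<open>D \<subseteq> S\<close>]
    by (simp add: card_Diff_subset finite_subset of_nat_diff of_nat_monom mult_monom)
  finally show ?thesis
    by (simp add: insertion_op_monom S_def d_def e_def)
qed

lemma f_poly_Suc:
  assumes "L \<ge> 1"
  shows "f_poly (Suc L) = insertion_op (Suc L div 2) (of_bool (odd (Suc L))) (f_poly L)"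
proof -
  have "f_poly (Suc L) = (\<Sum>x\<in>(SIGMA p:cycles_o L. odd_succ_positions p).
                           monom 1 (drop_oo ((\<lambda>(p, i). insert_after p i (Suc L)) x)))"
    unfolding f_poly_def using bij_betw_insert_max[OF assms]
    by (rule sum.reindex_bij_betw[symmetric])
  also have "\<dots> = (\<Sum>(p, i)\<in>(SIGMA p:cycles_o L. odd_succ_positions p).
                           monom 1 (drop_oo (insert_after p i (Suc L))))"
    by (simp add: case_prod_beta)
  also have "\<dots> = (\<Sum>p\<in>cycles_o L. \<Sum>i\<in>odd_succ_positions p.
                       monom 1 (drop_oo (insert_after p i (Suc L))))"
    by (rule sum.Sigma[symmetric]) (simp_all add: finite_cycles_o odd_succ_positions_def)
  also have "\<dots> = (\<Sum>p\<in>cycles_o L.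
                       insertion_op (Suc L div 2) (of_bool (odd (Suc L))) (monom 1 (drop_oo p)))"
    by (intro sum.cong refl sum_insert_max_monom)
  also have "\<dots> = insertion_op (Suc L div 2) (of_bool (odd (Suc L))) (f_poly L)"
    by (simp add: f_poly_def insertion_op_sum)
  finally show ?thesis .
qed

lemma f_poly_1: "f_poly 1 = 1"
proof -
  have "drop_pos [1] = {}"
    by (auto simp: drop_pos_def nxt_def)
  then have "cycles_o 1 = {[1]}" "drop_oo [1] = 0"
    by (auto simp: cycles_o_def cycle_reps_def drop_oo_def length_Suc_conv)
  then show ?thesis
    by (simp add: f_poly_def)
qed

theorem lemma3p1:
  shows "f_poly 1 = 1 \<and>
    (\<forall>n::nat. n \<ge> 1 \<longrightarrow>
       f_poly (2*n) = smult (of_nat n) (f_poly (2*n-1)) - [:0, 1:] * pderiv (f_poly (2*n-1))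
                      + pderiv (f_poly (2*n-1))
     \<and> f_poly (2*n+1) = smult (of_nat n) ([:0, 1:] * f_poly (2*n))
                      - [:0, 0, 1:] * pderiv (f_poly (2*n)) + [:0, 1:] * pderiv (f_poly (2*n)))"
proof (intro conjI allI impI f_poly_1)
  fix n :: nat
  assume "n \<ge> 1"
  have "f_poly (Suc (2*n-1)) = insertion_op n 0 (f_poly (2*n-1))"
    using f_poly_Suc[of "2*n-1"] \<open>n \<ge> 1\<close> by simp
  then show "f_poly (2*n) = smult (of_nat n) (f_poly (2*n-1)) - [:0, 1:] * pderiv (f_poly (2*n-1))
                      + pderiv (f_poly (2*n-1))"
    using \<open>n \<ge> 1\<close> by (simp add: insertion_op_def monom_Suc monom_0)
  have "f_poly (Suc (2*n)) = insertion_op n 1 (f_poly (2*n))"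
    using f_poly_Suc[of "2*n"] \<open>n \<ge> 1\<close> by simp
  then show "f_poly (2*n+1) = smult (of_nat n) ([:0, 1:] * f_poly (2*n))
                      - [:0, 0, 1:] * pderiv (f_poly (2*n)) + [:0, 1:] * pderiv (f_poly (2*n))"
    by (simp add: insertion_op_def monom_Suc monom_0)
qed

end
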